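(* Let $W$ be an eventually periodic subset of $\mathbb{Z}^d$ with periods $u_1,\dots,u_d$, and let $\mathscr{W}_1,\mathcal{W}$ be as defined in the context. Suppose $\mathscr{W}_1\neq\emptyset$ and there exists a nonempty finite subset $\mathcal{M}\subseteq\mathbb{Z}^d$ such that: (1) $\pi$ restricted to $\mathcal{M}$ is injective; (2) $\pi(\mathcal{M}+(\mathcal{W}\cup\mathscr{W}_1))=\mathbb{Z}^d/\mathcal{L}$; (3) for every $m\in\mathcal{M}$ there exists $w\in\mathscr{W}_1$ such that $m+w\not\equiv m'+w'\pmod{\mathcal{L}}$ for all $m'\in\mathcal{M}\setminus\{m\}$ and all $w'\in\mathcal{W}\cup\mathscr{W}_1$. Then $W$ has a minimal complement in $\mathbb{Z}^d$.
   Context: $d\geqslant1$, $\mathbb{N}=\{0,1,2,\dots\}$. Let $u_1,\dots,u_d\in\mathbb{Z}^d$ satisfy no nontrivial $\mathbb{Z}$-linear relation, $\mathcal{L}=\mathbb{Z}u_1+\dots+\mathbb{Z}u_d$, $P=\mathbb{N}u_1+\dots+\mathbb{N}u_d$, $\pi:\mathbb{Z}^d\to\mathbb{Z}^d/\mathcal{L}$ the quotient map. A nonempty $X\subseteq\mathbb{Z}^d$ is eventually periodic with periods $u_1,\dots,u_d$ if $X\subseteq F+P$ for some nonempty finite $F\subseteq\mathbb{Z}^d$ and $x+P\subseteq X$ for all but finitely many $x\in X$. For such $W$: $\mathscr{W}=\{w\in W:w+P\not\subseteq W\}$; $\mathcal{W}=\{w\in W\setminus\mathscr{W}:(w-P)\cap(W\setminus\mathscr{W})=\{w\}\}$;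 $\mathscr{W}_1$ is the set of elements of $\mathscr{W}$ congruent modulo $\mathcal{L}$ to no element of $\mathcal{W}$. A nonempty $M\subseteq\mathbb{Z}^d$ is a complement of $W$ if $M+W=\mathbb{Z}^d$, and a minimal complement if no proper subset of $M$ is a complement of $W$. *)

theory Defs
  imports "HOL-Analysis.Analysis"
begin

text \<open>Z^d is modelled as int ^ 'd, with 'd a finite index type of cardinality d.
  The periods u_1..u_d are a family u indexed by 'd.\<close>

definition sumset :: "('a::plus) set \<Rightarrow> 'a set \<Rightarrow> 'a set" where
  "sumset A B = {a + b | a b. a \<in> A \<and> b \<in> B}"

definition lin_indep_Z :: "('d::finite \<Rightarrow> int ^ 'd) \<Rightarrow> bool" where
  "lin_indep_Z u \<longleftrightarrow> (\<forall>c :: 'd \<Rightarrow> int. (\<Sum>i\<in>UNIV. c i *s u i) = 0 \<longrightarrow> (\<forall>i. c i = 0))"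

definition lattice :: "('d::finite \<Rightarrow> int ^ 'd) \<Rightarrow> (int ^ 'd) set" where
  "lattice u = {\<Sum>i\<in>UNIV. c i *s u i | c. True}"

definition cone :: "('d::finite \<Rightarrow> int ^ 'd) \<Rightarrow> (int ^ 'd) set" where
  "cone u = {\<Sum>i\<in>UNIV. c i *s u i | c. \<forall>i. c i \<ge> 0}"

text \<open>congruence modulo the lattice L (i.e. equal images under pi)\<close>
definition congL :: "('d::finite \<Rightarrow> int ^ 'd) \<Rightarrow> int ^ 'd \<Rightarrow> int ^ 'd \<Rightarrow> bool" where
  "congL u x y \<longleftrightarrow> x - y \<in> lattice u"

definition eventually_periodic :: "('d::finite \<Rightarrow> int ^ 'd) \<Rightarrow> (int ^ 'd) set \<Rightarrow> bool" where
  "eventually_periodic u X \<longleftrightarrow> X \<noteq> {} \<and>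
     (\<exists>F. finite F \<and> F \<noteq> {} \<and> X \<subseteq> sumset F (cone u)) \<and>
     finite {x \<in> X. \<not> ((\<lambda>p. x + p) ` cone u \<subseteq> X)}"

definition scrW :: "('d::finite \<Rightarrow> int ^ 'd) \<Rightarrow> (int ^ 'd) set \<Rightarrow> (int ^ 'd) set" where
  "scrW u W = {w \<in> W. \<not> ((\<lambda>p. w + p) ` cone u \<subseteq> W)}"

definition calW :: "('d::finite \<Rightarrow> int ^ 'd) \<Rightarrow> (int ^ 'd) set \<Rightarrow> (int ^ 'd) set" where
  "calW u W = {w \<in> W - scrW u W. (\<lambda>p. w - p) ` cone u \<inter> (W - scrW u W) = {w}}"

definition scrW1 :: "('d::finite \<Rightarrow> int ^ 'd) \<Rightarrow> (int ^ 'd) set \<Rightarrow> (int ^ 'd) set" where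
  "scrW1 u W = {w \<in> scrW u W. \<forall>v \<in> calW u W. \<not> congL u w v}"

definition is_complement :: "('a::plus) set \<Rightarrow> 'a set \<Rightarrow> bool" where
  "is_complement M W \<longleftrightarrow> M \<noteq> {} \<and> sumset M W = UNIV"

definition is_minimal_complement :: "('a::plus) set \<Rightarrow> 'a set \<Rightarrow> bool" where
  "is_minimal_complement M W \<longleftrightarrow> is_complement M W \<and> (\<forall>M'. M' \<subset> M \<longrightarrow> \<not> is_complement M' W)"

end

theory Submission
  imports Defs
begin

(* Let Z = \<M> + L. By hypothesis (2), Z is a complement of W; a minimal complement is Z - N
   for a maximal N \<subseteq> Z whose removal leaves a complement, and Zorn's lemma provides such N
   once the union of every chain of admissible sets is again admissible.
   A point x that is not congruent to any m + v with m \<in> \<M> and v \<in> calW has only finitely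
   many representations x = z + w with z \<in> Z, w \<in> W: every such w lies in the finite set
   scrW, since each element of W - scrW lies above an element of calW in the cone order.
   Hence x stays covered when the union of a chain is removed.
   For x congruent to m + v with v \<in> calW, let w_m \<in> scrW1 be the witness of hypothesis (3)
   for m. The points congruent to m + w_m are of the first kind, hence stay covered. A
   representation of such a point pushed deep into the cone must use m itself and some
   s \<in> scrW congruent to w_m, and the periodicity of W above v then turns it into a
   representation of x. *)

definition lincomb :: "('d::finite \<Rightarrow> int ^ 'd) \<Rightarrow> ('d \<Rightarrow> int) \<Rightarrow> int ^ 'd" where
  "lincomb u c = (\<Sum>i\<in>UNIV. c i *s u i)"

lemma lincomb_add: "lincomb u a + lincomb u b = lincomb u (\<lambda>i. a i + b i)"
  by (simp add: lincomb_def sum.distrib vector_sadd_rdistrib)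

lemma lincomb_diff: "lincomb u a - lincomb u b = lincomb u (\<lambda>i. a i - b i)"
  by (simp add: lincomb_def sum_subtractf vector_sub_rdistrib)

lemma lincomb_zero: "lincomb u (\<lambda>i. 0) = 0"
  by (simp add: lincomb_def)

lemma lincomb_inj:
  assumes "lin_indep_Z u" and "lincomb u a = lincomb u b"
  shows "a = b"
proof -
  have "lincomb u (\<lambda>i. a i - b i) = 0"
    using assms(2) lincomb_diff[of u a b] by simp
  then have "\<forall>i. a i - b i = 0"
    using assms(1)[unfolded lin_indep_Z_def, rule_format, of "\<lambda>i. a i - b i"]
    by (simp add: lincomb_def)
  then show ?thesis by auto
qed

lemma lattice_eq_range_lincomb: "lattice u = range (lincomb u)"
  by (auto simp: lattice_def lincomb_def)

lemma cone_eq_lincomb_nonneg: "cone u = {lincomb u c | c. \<forall>i. 0 \<le> c i}"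
  by (auto simp: cone_def lincomb_def)

lemma zero_in_cone: "0 \<in> cone u"
  unfolding cone_eq_lincomb_nonneg using lincomb_zero[of u] by force

lemma cone_add: "p \<in> cone u \<Longrightarrow> q \<in> cone u \<Longrightarrow> p + q \<in> cone u"
  unfolding cone_eq_lincomb_nonneg by (auto simp: lincomb_add)

lemma cone_subset_lattice: "cone u \<subseteq> lattice u"
  unfolding cone_eq_lincomb_nonneg lattice_eq_range_lincomb by auto

lemma lattice_add: "p \<in> lattice u \<Longrightarrow> q \<in> lattice u \<Longrightarrow> p + q \<in> lattice u"
  unfolding lattice_eq_range_lincomb by (auto simp: lincomb_add)

lemma lattice_diff: "p \<in> lattice u \<Longrightarrow> q \<in> lattice u \<Longrightarrow> p - q \<in> lattice u"
  unfolding lattice_eq_range_lincomb by (auto simp: lincomb_diff)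

lemma lattice_translate_into_cone: "x \<in> lattice u \<Longrightarrow> \<exists>q\<in>cone u. x + q \<in> cone u"
proof -
  assume "x \<in> lattice u"
  then obtain c where x: "x = lincomb u c"
    unfolding lattice_eq_range_lincomb by auto
  have "lincomb u (\<lambda>i. \<bar>c i\<bar>) \<in> cone u" and "x + lincomb u (\<lambda>i. \<bar>c i\<bar>) \<in> cone u"
    unfolding x lincomb_add cone_eq_lincomb_nonneg by auto
  then show ?thesis by blast
qed

lemma finite_lattice_translate_into_cone:
  "finite X \<Longrightarrow> X \<subseteq> lattice u \<Longrightarrow> \<exists>q\<in>cone u. \<forall>x\<in>X. x + q \<in> cone u"
proof (induction X rule: finite_induct)
  case empty
  then show ?case using zero_in_cone by blast
next
  case (insert x X)
  then obtain q where q: "q \<in> cone u" "\<forall>y\<in>X. y + q \<in> cone u" by auto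
  obtain q' where q': "q' \<in> cone u" "x + q' \<in> cone u"
    using lattice_translate_into_cone insert.prems by blast
  have "\<forall>y\<in>insert x X. y + (q + q') \<in> cone u"
    using q q' cone_add by (metis add.assoc add.commute insert_iff)
  then show ?case using q(1) q'(1) cone_add by blast
qed

lemma congL_refl: "congL u x x"
  using zero_in_cone cone_subset_lattice by (fastforce simp: congL_def)

lemma congL_sym: "congL u x y \<Longrightarrow> congL u y x"
  using lattice_diff[of 0 u "x - y"] zero_in_cone cone_subset_lattice
  by (fastforce simp: congL_def)

lemma congL_trans: "congL u x y \<Longrightarrow> congL u y z \<Longrightarrow> congL u x z"
  using lattice_add[of "x - y" u "y - z"] by (simp add: congL_def)

lemma finite_scrW: "eventually_periodic u W \<Longrightarrow> finite (scrW u W)"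
  unfolding eventually_periodic_def scrW_def by simp

lemma add_cone_mem_if_notin_scrW: "w \<in> W \<Longrightarrow> w \<notin> scrW u W \<Longrightarrow> p \<in> cone u \<Longrightarrow> w + p \<in> W"
  by (auto simp: scrW_def)

lemma coefficient_sum_bounded:
  fixes u :: "'d::finite \<Rightarrow> int ^ 'd"
  assumes indep: "lin_indep_Z u" and ep: "eventually_periodic u W"
  obtains B where "\<And>c. w - lincomb u c \<in> W \<Longrightarrow> sum c UNIV \<le> B"
proof -
  obtain F where F: "finite F" "W \<subseteq> sumset F (cone u)"
    using ep unfolding eventually_periodic_def by blast
  have "\<exists>b. \<forall>c q. (\<forall>i. 0 \<le> q i) \<longrightarrow> w - f = lincomb u (\<lambda>i. c i + q i) \<longrightarrow> sum c UNIV \<le> b"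
    for f
  proof (cases "w - f \<in> lattice u")
    case True
    then obtain e where e: "w - f = lincomb u e"
      by (auto simp: lattice_eq_range_lincomb)
    have "sum c UNIV \<le> sum e UNIV"
      if "\<forall>i. 0 \<le> q i" "w - f = lincomb u (\<lambda>i. c i + q i)" for c q
    proof -
      have "e = (\<lambda>i. c i + q i)"
        using lincomb_inj[OF indep] e that(2) by simp
      then show ?thesis using that(1) by (simp add: sum_mono)
    qed
    then show ?thesis by blast
  next
    case False
    then show ?thesis by (auto simp: lattice_eq_range_lincomb)
  qed
  then obtain b where b: "\<And>f c q. \<forall>i. 0 \<le> q i \<Longrightarrow> w - f = lincomb u (\<lambda>i. c i + q i) \<Longrightarrow>
      sum c UNIV \<le> b f"
    by metis
  show thesis
  proof
    fix c assume "w - lincomb u c \<in> W"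
    then obtain f q where f: "f \<in> F" and "\<forall>i. 0 \<le> q i" "w - lincomb u c = f + lincomb u q"
      using F(2) by (auto simp: sumset_def cone_eq_lincomb_nonneg)
    then have "sum c UNIV \<le> b f"
      by (intro b) (auto simp: lincomb_add[symmetric] algebra_simps)
    also have "\<dots> \<le> Max (b ` F)"
      using F(1) f by simp
    finally show "sum c UNIV \<le> Max (b ` F)" .
  qed
qed

lemma exists_max_coefficient_sum:
  fixes u :: "'d::finite \<Rightarrow> int ^ 'd"
  assumes indep: "lin_indep_Z u" and ep: "eventually_periodic u W"
    and w: "w \<in> W - scrW u W"
  obtains c where "\<forall>i. 0 \<le> c i" "w - lincomb u c \<in> W - scrW u W"
    and "\<And>c'. \<forall>i. 0 \<le> c' i \<Longrightarrow> w - lincomb u c' \<in> W - scrW u W \<Longrightarrow> sum c' UNIV \<le> sum c UNIV"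
proof -
  define D where "D = {c. (\<forall>i. 0 \<le> c i) \<and> w - lincomb u c \<in> W - scrW u W}"
  obtain B where B: "\<And>c. w - lincomb u c \<in> W \<Longrightarrow> sum c UNIV \<le> B"
    using coefficient_sum_bounded[OF indep ep] by blast
  have "(\<lambda>i. 0) \<in> D"
    using w by (simp add: D_def lincomb_zero)
  moreover have "\<forall>c. c \<in> D \<longrightarrow> nat (sum c UNIV) < nat B + 1"
    using B by (auto simp: D_def le_imp_less_Suc nat_mono)
  ultimately obtain c where c: "c \<in> D"
    and c_max: "\<And>c'. c' \<in> D \<Longrightarrow> nat (sum c' UNIV) \<le> nat (sum c UNIV)"
    using Lattices_Big.ex_has_greatest_nat[of "\<lambda>c. c \<in> D" _ "\<lambda>c. nat (sum c UNIV)"]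
    by blast
  have "0 \<le> sum c UNIV"
    using c by (simp add: D_def sum_nonneg)
  then have "sum c' UNIV \<le> sum c UNIV" if "c' \<in> D" for c'
    using c_max[OF that] by (simp add: nat_le_eq_zle)
  then show thesis
    using that c unfolding D_def by blast
qed

(* The element below w with maximal coefficient sum has nothing of W - scrW strictly below it. *)
lemma exists_calW_below:
  assumes indep: "lin_indep_Z u" and ep: "eventually_periodic u W"
    and w: "w \<in> W - scrW u W"
  shows "\<exists>v\<in>calW u W. w - v \<in> cone u"
proof -
  obtain c where c: "\<forall>i. 0 \<le> c i" "w - lincomb u c \<in> W - scrW u W"
    and c_max: "\<And>c'. \<forall>i. 0 \<le> c' i \<Longrightarrow> w - lincomb u c' \<in> W - scrW u W \<Longrightarrow>
      sum c' UNIV \<le> sum c UNIV"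
    using exists_max_coefficient_sum[OF indep ep w] by blast
  define v where "v = w - lincomb u c"
  have "y = v" if y: "y \<in> W - scrW u W" "y \<in> (\<lambda>p. v - p) ` cone u" for y
  proof -
    obtain c' where c': "\<forall>i. 0 \<le> c' i" "y = v - lincomb u c'"
      using y(2) unfolding cone_eq_lincomb_nonneg by auto
    have "w - lincomb u (\<lambda>i. c i + c' i) = y"
      using c'(2) lincomb_add[of u c c'] by (simp add: v_def algebra_simps)
    then have "sum (\<lambda>i. c i + c' i) UNIV \<le> sum c UNIV"
      using y(1) c(1) c'(1) by (intro c_max) auto
    then have "sum c' UNIV = 0"
      using c'(1) by (simp add: sum.distrib antisym sum_nonneg)
    then have "c' = (\<lambda>i. 0)"
      using c'(1) by (auto simp: sum_nonneg_eq_0_iff)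
    then show "y = v"
      using c'(2) by (simp add: lincomb_zero)
  qed
  moreover have "v \<in> (\<lambda>p. v - p) ` cone u"
    using zero_in_cone[of u] by force
  ultimately have "v \<in> calW u W"
    using c(2) unfolding calW_def v_def by blast
  moreover have "w - v \<in> cone u"
    using c(1) by (auto simp: v_def cone_eq_lincomb_nonneg)
  ultimately show ?thesis by blast
qed

lemma congL_calW_or_scrW1:
  assumes indep: "lin_indep_Z u" and ep: "eventually_periodic u W" and s: "s \<in> W"
  shows "\<exists>w\<in>calW u W \<union> scrW1 u W. congL u s w"
proof (cases "s \<in> scrW u W")
  case True
  then show ?thesis
    using congL_refl[of u s] unfolding scrW1_def by blast
next
  case False
  then obtain v where "v \<in> calW u W" "s - v \<in> cone u"
    using exists_calW_below[OF indep ep] s by blast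
  then show ?thesis
    using cone_subset_lattice by (auto simp: congL_def)
qed

lemma scrW_if_congL_scrW1:
  assumes indep: "lin_indep_Z u" and ep: "eventually_periodic u W"
    and "s \<in> W" "w \<in> scrW1 u W" "congL u s w"
  shows "s \<in> scrW u W"
proof (rule ccontr)
  assume "s \<notin> scrW u W"
  then obtain v where v: "v \<in> calW u W" "s - v \<in> cone u"
    using exists_calW_below[OF indep ep] assms(3) by blast
  then have "congL u s v"
    using cone_subset_lattice by (auto simp: congL_def)
  then have "congL u w v"
    using congL_trans[OF congL_sym[OF assms(5)]] by blast
  then show False
    using assms(4) v(1) unfolding scrW1_def by blast
qed

lemma mem_sumset_diff_Union_chain:
  fixes Z W :: "'a::ab_group_add set"
  assumes chain: "subset.chain {N. N \<subseteq> Z \<and> sumset (Z - N) W = UNIV} C" and "C \<noteq> {}"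
    and fin: "finite {w\<in>W. x - w \<in> Z}"
  shows "x \<in> sumset (Z - \<Union>C) W"
proof (rule ccontr)
  assume x: "x \<notin> sumset (Z - \<Union>C) W"
  have "(\<lambda>w. x - w) ` {w\<in>W. x - w \<in> Z} \<subseteq> \<Union>C"
  proof
    fix a assume "a \<in> (\<lambda>w. x - w) ` {w\<in>W. x - w \<in> Z}"
    then obtain w where "w \<in> W" "a \<in> Z" "x = a + w" by auto
    then show "a \<in> \<Union>C"
      using x unfolding sumset_def by blast
  qed
  then obtain N where N: "N \<in> C" "(\<lambda>w. x - w) ` {w\<in>W. x - w \<in> Z} \<subseteq> N"
    using finite_subset_Union_chain[OF finite_imageI[OF fin] _ \<open>C \<noteq> {}\<close> chain] by blast
  have "sumset (Z - N) W = UNIV"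
    using N(1) chain unfolding subset.chain_def by blast
  then obtain a w where a: "a \<in> Z - N" and "w \<in> W" "x = a + w"
    unfolding sumset_def by blast
  then have "a \<in> (\<lambda>w. x - w) ` {w\<in>W. x - w \<in> Z}"
    by force
  then show False
    using N(2) a by blast
qed

lemma exists_minimal_complement_Zorn:
  fixes Z W :: "'a::ab_group_add set"
  assumes "sumset Z W = UNIV"
    and "\<And>C. subset.chain {N. N \<subseteq> Z \<and> sumset (Z - N) W = UNIV} C \<Longrightarrow> C \<noteq> {} \<Longrightarrow>
      sumset (Z - \<Union>C) W = UNIV"
  shows "\<exists>M. is_minimal_complement M W"
proof -
  define A where "A = {N. N \<subseteq> Z \<and> sumset (Z - N) W = UNIV}"
  have "\<Union>C \<in> A" if "subset.chain A C" for C
    using that assms unfolding A_def subset.chain_def by (cases "C = {}") auto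
  then obtain N where N: "N \<in> A" and N_max: "\<And>X. X \<in> A \<Longrightarrow> N \<subseteq> X \<Longrightarrow> X = N"
    using subset_Zorn' by metis
  have "is_minimal_complement (Z - N) W"
    unfolding is_minimal_complement_def is_complement_def
  proof (intro conjI allI impI)
    show "sumset (Z - N) W = UNIV"
      using N by (simp add: A_def)
    then show "Z - N \<noteq> {}"
      by (auto simp: sumset_def)
    fix M' assume M': "M' \<subset> Z - N"
    show "\<not> (M' \<noteq> {} \<and> sumset M' W = UNIV)"
    proof
      assume "M' \<noteq> {} \<and> sumset M' W = UNIV"
      moreover have "Z - (Z - M') = M'"
        using M' by blast
      ultimately have "Z - M' \<in> A"
        unfolding A_def by auto
      moreover have "N \<subseteq> Z - M'"
        using M' N by (auto simp: A_def)
      ultimately show False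
        using N_max M' by blast
    qed
  qed
  then show ?thesis by blast
qed

lemma finite_representations_off_calW_classes:
  assumes indep: "lin_indep_Z u" and ep: "eventually_periodic u W"
    and x: "\<not> (\<exists>y\<in>sumset \<M> (calW u W). congL u x y)"
  shows "finite {w\<in>W. x - w \<in> sumset \<M> (lattice u)}"
proof -
  have "w \<in> scrW u W" if w: "w \<in> W" "x - w \<in> sumset \<M> (lattice u)" for w
  proof (rule ccontr)
    assume "w \<notin> scrW u W"
    then obtain v where v: "v \<in> calW u W" "w - v \<in> cone u"
      using exists_calW_below[OF indep ep] w(1) by blast
    obtain m \<mu> where m: "m \<in> \<M>" "\<mu> \<in> lattice u" "x - w = m + \<mu>"
      using w(2) unfolding sumset_def by blast
    have "x - (m + v) = \<mu> + (w - v)"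
      using m(3) by (simp add: algebra_simps)
    moreover have "\<mu> + (w - v) \<in> lattice u"
      using lattice_add m(2) v(2) cone_subset_lattice by blast
    ultimately have "congL u x (m + v)"
      unfolding congL_def by metis
    moreover have "m + v \<in> sumset \<M> (calW u W)"
      using m(1) v(1) by (auto simp: sumset_def)
    ultimately show False
      using x by blast
  qed
  then have "{w\<in>W. x - w \<in> sumset \<M> (lattice u)} \<subseteq> scrW u W"
    by blast
  then show ?thesis
    using finite_scrW[OF ep] by (rule finite_subset)
qed

lemma congL_summand_if_separated:
  assumes indep: "lin_indep_Z u" and ep: "eventually_periodic u W"
    and m: "m \<in> \<M>" and wm: "wm \<in> scrW1 u W"
    and separated: "\<forall>m'\<in>\<M> - {m}. \<forall>w'\<in>calW u W \<union> scrW1 u W. \<not> congL u (m + wm) (m' + w')"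
    and a: "a \<in> sumset \<M> (lattice u)" and s: "s \<in> W" and as: "congL u (a + s) (m + wm)"
  shows "congL u s wm"
proof -
  obtain m' \<mu> where m': "m' \<in> \<M>" "\<mu> \<in> lattice u" "a = m' + \<mu>"
    using a unfolding sumset_def by blast
  obtain w' where w': "w' \<in> calW u W \<union> scrW1 u W" "congL u s w'"
    using congL_calW_or_scrW1[OF indep ep s] by blast
  have "a + s - (m' + w') = \<mu> + (s - w')"
    using m'(3) by (simp add: algebra_simps)
  then have "congL u (a + s) (m' + w')"
    using lattice_add m'(2) w'(2) unfolding congL_def by metis
  then have "congL u (m + wm) (m' + w')"
    using congL_trans[OF congL_sym[OF as]] by blast
  then have "m' = m"
    using separated m'(1) w'(1) by blast
  then have "s - wm = (a + s - (m + wm)) - \<mu>"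
    using m'(3) by (simp add: algebra_simps)
  then show "congL u s wm"
    using as m'(2) lattice_diff unfolding congL_def by metis
qed

lemma mem_sumset_if_congL_calW:
  assumes indep: "lin_indep_Z u" and ep: "eventually_periodic u W"
    and M: "M \<subseteq> sumset \<M> (lattice u)" and m: "m \<in> \<M>" and wm: "wm \<in> scrW1 u W"
    and separated: "\<forall>m'\<in>\<M> - {m}. \<forall>w'\<in>calW u W \<union> scrW1 u W. \<not> congL u (m + wm) (m' + w')"
    and covered: "\<And>x. congL u x (m + wm) \<Longrightarrow> x \<in> sumset M W"
    and v: "v \<in> calW u W" and y: "congL u y (m + v)"
  shows "y \<in> sumset M W"
proof -
  define S where "S = {s \<in> scrW u W. congL u s wm}"
  have "finite ((\<lambda>s. s - wm) ` S)"
    using finite_scrW[OF ep] by (simp add: S_def)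
  moreover have "(\<lambda>s. s - wm) ` S \<subseteq> lattice u"
    by (auto simp: S_def congL_def)
  ultimately obtain q where q: "q \<in> cone u" and q_shift: "\<forall>z\<in>(\<lambda>s. s - wm) ` S. z + q \<in> cone u"
    using finite_lattice_translate_into_cone by blast
  \<comment> \<open>q pushes s - wm into the cone for every summand s of a representation of x.\<close>
  define x where "x = y - v + wm - q"
  have x_diff: "x - (m + wm) = (y - (m + v)) - q"
    by (simp add: x_def algebra_simps)
  have "q \<in> lattice u"
    using q cone_subset_lattice by blast
  then have x: "congL u x (m + wm)"
    using lattice_diff[OF y[unfolded congL_def]] unfolding congL_def x_diff by blast
  then obtain a s where a: "a \<in> M" and s: "s \<in> W" and x_eq: "x = a + s"
    using covered unfolding sumset_def by blast
  have "congL u s wm"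
    using congL_summand_if_separated[OF indep ep m wm separated _ s] a M x x_eq by blast
  then have "s \<in> S"
    using scrW_if_congL_scrW1[OF indep ep s wm] by (simp add: S_def)
  then have "s - wm + q \<in> cone u"
    using q_shift by blast
  then have "v + (s - wm + q) \<in> W"
    using add_cone_mem_if_notin_scrW[of v W u] v by (simp add: calW_def)
  moreover have "y = a + (v + (s - wm + q))"
    using x_eq by (simp add: x_def algebra_simps)
  ultimately show ?thesis
    using a by (auto simp: sumset_def)
qed

lemma not_congL_calW_class_if_separated:
  assumes m: "m \<in> \<M>" and wm: "wm \<in> scrW1 u W"
    and separated: "\<forall>m'\<in>\<M> - {m}. \<forall>w'\<in>calW u W \<union> scrW1 u W. \<not> congL u (m + wm) (m' + w')"
    and x: "congL u x (m + wm)"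
  shows "\<not> (\<exists>z\<in>sumset \<M> (calW u W). congL u x z)"
proof
  assume "\<exists>z\<in>sumset \<M> (calW u W). congL u x z"
  then obtain m' v' where m': "m' \<in> \<M>" "v' \<in> calW u W" "congL u x (m' + v')"
    by (auto simp: sumset_def)
  then have c: "congL u (m + wm) (m' + v')"
    using congL_trans[OF congL_sym[OF x]] by blast
  show False
  proof (cases "m' = m")
    case True
    then have "congL u wm v'"
      using c by (simp add: congL_def)
    then show False
      using wm m'(2) by (simp add: scrW1_def)
  next
    case False
    then show False
      using separated m' c by blast
  qed
qed

lemma sumset_eq_UNIV_if_covers_off_calW_classes:
  assumes indep: "lin_indep_Z u" and ep: "eventually_periodic u W"
    and uniq: "\<forall>m\<in>\<M>. \<exists>w\<in>scrW1 u W. \<forall>m'\<in>\<M> - {m}. \<forall>w'\<in>calW u W \<union> scrW1 u W.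
      \<not> congL u (m + w) (m' + w')"
    and M: "M \<subseteq> sumset \<M> (lattice u)"
    and covered: "\<And>x. \<not> (\<exists>y\<in>sumset \<M> (calW u W). congL u x y) \<Longrightarrow> x \<in> sumset M W"
  shows "sumset M W = UNIV"
proof -
  have "y \<in> sumset M W" for y
  proof (cases "\<exists>z\<in>sumset \<M> (calW u W). congL u y z")
    case False
    then show ?thesis using covered by blast
  next
    case True
    then obtain m v where m: "m \<in> \<M>" and v: "v \<in> calW u W" and y: "congL u y (m + v)"
      by (auto simp: sumset_def)
    obtain wm where wm: "wm \<in> scrW1 u W"
      and separated: "\<forall>m'\<in>\<M> - {m}. \<forall>w'\<in>calW u W \<union> scrW1 u W. \<not> congL u (m + wm) (m' + w')"
      using uniq m by blast
    have "x \<in> sumset M W" if "congL u x (m + wm)" for x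
      using covered not_congL_calW_class_if_separated[OF m wm separated that] by blast
    then show ?thesis
      using mem_sumset_if_congL_calW[OF indep ep M m wm separated _ v y] by blast
  qed
  then show ?thesis by blast
qed

lemma sumset_lattice_eq_UNIV_if_congL_cover:
  assumes A: "A \<subseteq> W" and cover: "\<forall>x. \<exists>y\<in>sumset \<M> A. congL u x y"
  shows "sumset (sumset \<M> (lattice u)) W = UNIV"
proof -
  have "x \<in> sumset (sumset \<M> (lattice u)) W" for x
  proof -
    obtain m w where m: "m \<in> \<M>" and w: "w \<in> A" and x: "congL u x (m + w)"
      using cover[rule_format, of x] unfolding sumset_def by blast
    have "x - w = m + (x - (m + w))"
      by simp
    then have "x - w \<in> sumset \<M> (lattice u)"
      using m x unfolding sumset_def congL_def by blast
    moreover have "x = (x - w) + w"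
      by simp
    ultimately show ?thesis
      using w A unfolding sumset_def by blast
  qed
  then show ?thesis by blast
qed

theorem theorem4p12:
  fixes u :: "'d::finite \<Rightarrow> int ^ 'd" and W :: "(int ^ 'd) set"
  assumes indep: "lin_indep_Z u"
    and ep: "eventually_periodic u W"
    and ne: "scrW1 u W \<noteq> {}"
    and M: "finite \<M>" "\<M> \<noteq> {}"
    and inj: "\<forall>m\<in>\<M>. \<forall>m'\<in>\<M>. congL u m m' \<longrightarrow> m = m'"
    and cover: "\<forall>x. \<exists>y \<in> sumset \<M> (calW u W \<union> scrW1 u W). congL u x y"
    and uniq: "\<forall>m\<in>\<M>. \<exists>w\<in>scrW1 u W. \<forall>m'\<in>\<M> - {m}. \<forall>w'\<in>calW u W \<union> scrW1 u W.
                  \<not> congL u (m + w) (m' + w')"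
  shows "\<exists>M. is_minimal_complement M W"
proof -
  define Z where "Z = sumset \<M> (lattice u)"
  have "calW u W \<union> scrW1 u W \<subseteq> W"
    by (auto simp: calW_def scrW1_def scrW_def)
  then have "sumset Z W = UNIV"
    unfolding Z_def using cover by (rule sumset_lattice_eq_UNIV_if_congL_cover)
  moreover have "sumset (Z - \<Union>C) W = UNIV"
    if "subset.chain {N. N \<subseteq> Z \<and> sumset (Z - N) W = UNIV} C" "C \<noteq> {}" for C
  proof (rule sumset_eq_UNIV_if_covers_off_calW_classes[OF indep ep uniq])
    show "Z - \<Union>C \<subseteq> sumset \<M> (lattice u)"
      by (auto simp: Z_def)
    show "x \<in> sumset (Z - \<Union>C) W" if "\<not> (\<exists>y\<in>sumset \<M> (calW u W). congL u x y)" for x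
      using mem_sumset_diff_Union_chain[OF \<open>subset.chain _ C\<close> \<open>C \<noteq> {}\<close>]
        finite_representations_off_calW_classes[OF indep ep that]
      unfolding Z_def by blast
  qed
  ultimately show ?thesis
    by (rule exists_minimal_complement_Zorn)
qed

end
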